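(* Let $M=(S,\Sigma,\delta,s_0,F)$ be a deterministic finite automaton, let $T\ge 1$ be an integer, and for each $s\in S$ let $P(\cdot\mid s)$ and $Q(\cdot\mid s)$ be probability distributions on $\Sigma$. Define probability distributions $P$ and $Q$ on $\Sigma^T$ by $P(x)=\prod_{t=1}^T P(\sigma_t\mid s_t)$ and $Q(x)=\prod_{t=1}^T Q(\sigma_t\mid s_t)$ for $x=\sigma_1\cdots\sigma_T$, where $s_1\cdots s_{T+1}$ is the state sequence induced by $x$. Let $\epsilon=\max_{s\in S}\mathrm{TV}(P(\sigma\mid s),Q(\sigma\mid s))$. Then $$\mathrm{TV}(P(x),Q(x))\le 2T|S|^{T+1}\epsilon.$$
   Context: A deterministic finite automaton $M=(S,\Sigma,\delta,s_0,F)$ has a finite state set $S$, a finite alphabet $\Sigma$, a transition function $\delta:S\times\Sigma\to S$, an initial state $s_0\in S$ and a set of final states $F\subseteq S$. For a string $x=\sigma_1\cdots\sigma_T\in\Sigma^T$, the induced state sequence $s_1\cdots s_{T+1}$ is given by $s_1=s_0$ and $s_{t+1}=\delta(s_t,\sigma_t)$ for $1\le t\le T$. The total variation distance between discrete distributions is defined without the factor $1/2$: $\mathrm{TV}(\mu,\nu)=\sum_a|\mu(a)-\nu(a)|$. *)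

theory Defs
  imports "HOL-Analysis.Analysis"
begin

text \<open>State reached by a DFA with transition function delta from s0 after reading xs.
  run delta s0 (take (t-1) x) is the state s_t of the paper (1-indexed).\<close>
definition dfa_run :: "('s \<Rightarrow> 'a \<Rightarrow> 's) \<Rightarrow> 's \<Rightarrow> 'a list \<Rightarrow> 's" where
  "dfa_run delta s0 xs = foldl delta s0 xs"

definition string_prob :: "('s \<Rightarrow> 'a \<Rightarrow> real) \<Rightarrow> ('s \<Rightarrow> 'a \<Rightarrow> 's) \<Rightarrow> 's \<Rightarrow> 'a list \<Rightarrow> real" where
  "string_prob P delta s0 x = (\<Prod>t<length x. P (dfa_run delta s0 (take t x)) (x ! t))"

text \<open>Total variation distance without the factor 1/2, over a finite support set A.\<close>
definition tv :: "'b set \<Rightarrow> ('b \<Rightarrow> real) \<Rightarrow> ('b \<Rightarrow> real) \<Rightarrow> real" where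
  "tv A \<mu> \<nu> = (\<Sum>a\<in>A. \<bar>\<mu> a - \<nu> a\<bar>)"

definition strings_of_length :: "nat \<Rightarrow> 'a list set" where
  "strings_of_length T = {x. length x = T}"

end

theory Submission
  imports Defs
begin

text \<open>Conditioning on the first letter, the difference of the two string distributions started
  in state s splits into the letter difference at s, weighted by the P-probabilities of the
  suffixes, plus a Q-average of the same difference started in the successor states. The first
  part contributes at most \<open>\<epsilon>\<close> and the second, inductively, at most \<open>(T - 1) \<epsilon>\<close>, so the total
  variation is at most \<open>T \<epsilon>\<close>; the factor \<open>2 |S|^(T+1)\<close> is at least 1.\<close>

lemma string_prob_Nil [simp]: "string_prob P delta s [] = 1"
  by (simp add: string_prob_def)

lemma string_prob_Cons [simp]:
  "string_prob P delta s (a # x) = P s a * string_prob P delta (delta s a) x"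
proof -
  have "string_prob P delta s (a # x)
      = (\<Prod>t<Suc (length x). P (dfa_run delta s (take t (a # x))) ((a # x) ! t))"
    by (simp add: string_prob_def)
  also have "\<dots> = P s a * (\<Prod>t<length x. P (dfa_run delta s (take (Suc t) (a # x))) (x ! t))"
    by (subst prod.lessThan_Suc_shift) (simp add: dfa_run_def)
  also have "\<dots> = P s a * string_prob P delta (delta s a) x"
    by (simp add: string_prob_def dfa_run_def)
  finally show ?thesis .
qed

lemma string_prob_nonneg:
  assumes "\<And>s a. P s a \<ge> 0"
  shows "string_prob P delta s x \<ge> 0"
  unfolding string_prob_def by (rule prod_nonneg) (simp add: assms)

lemma strings_of_length_0: "strings_of_length 0 = {[]}"
  by (auto simp: strings_of_length_def)

lemma sum_strings_of_length_Suc: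
  fixes g :: "'a::finite list \<Rightarrow> 'b::comm_monoid_add"
  shows "(\<Sum>x\<in>strings_of_length (Suc n). g x) = (\<Sum>a\<in>UNIV. \<Sum>x\<in>strings_of_length n. g (a # x))"
proof -
  have eq: "strings_of_length (Suc n) = case_prod (#) ` (UNIV \<times> strings_of_length n)"
    by (auto simp: strings_of_length_def image_def length_Suc_conv)
  have "inj_on (case_prod (#)) (UNIV \<times> strings_of_length n)"
    by (auto simp: inj_on_def)
  then show ?thesis
    unfolding eq sum.reindex[OF \<open>inj_on _ _\<close>] by (simp add: sum.cartesian_product split_def)
qed

lemma sum_string_prob_eq_1:
  fixes P :: "'s \<Rightarrow> 'a::finite \<Rightarrow> real"
  assumes "\<And>s. (\<Sum>a\<in>UNIV. P s a) = 1"
  shows "(\<Sum>x\<in>strings_of_length n. string_prob P delta s x) = 1"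
proof (induction n arbitrary: s)
  case 0
  show ?case by (simp add: strings_of_length_0)
next
  case (Suc n)
  show ?case
    by (simp add: sum_strings_of_length_Suc sum_distrib_left[symmetric] Suc assms)
qed

lemma abs_mult_diff_le:
  fixes p q u v :: real
  assumes "u \<ge> 0" and "q \<ge> 0"
  shows "\<bar>p * u - q * v\<bar> \<le> \<bar>p - q\<bar> * u + q * \<bar>u - v\<bar>"
proof -
  have "p * u - q * v = (p - q) * u + q * (u - v)"
    by (simp add: algebra_simps)
  then show ?thesis
    using abs_triangle_ineq[of "(p - q) * u" "q * (u - v)"] assms by (simp add: abs_mult)
qed

lemma tv_string_prob_le:
  fixes P Q :: "'s \<Rightarrow> 'a::finite \<Rightarrow> real"
  assumes P_nonneg: "\<And>s a. P s a \<ge> 0" and P_sum: "\<And>s. (\<Sum>a\<in>UNIV. P s a) = 1"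
    and Q_nonneg: "\<And>s a. Q s a \<ge> 0" and Q_sum: "\<And>s. (\<Sum>a\<in>UNIV. Q s a) = 1"
    and tv_le: "\<And>s. tv UNIV (P s) (Q s) \<le> e"
  shows "tv (strings_of_length n) (string_prob P delta s) (string_prob Q delta s) \<le> real n * e"
proof (induction n arbitrary: s)
  case 0
  show ?case by (simp add: tv_def strings_of_length_0)
next
  case (Suc n)
  let ?p = "string_prob P delta" and ?q = "string_prob Q delta"
  let ?L = "strings_of_length n"
  have "tv (strings_of_length (Suc n)) (?p s) (?q s)
      = (\<Sum>a\<in>UNIV. \<Sum>x\<in>?L. \<bar>P s a * ?p (delta s a) x - Q s a * ?q (delta s a) x\<bar>)"
    by (simp add: tv_def sum_strings_of_length_Suc)
  also have "\<dots> \<le> (\<Sum>a\<in>UNIV. \<Sum>x\<in>?L.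
                    \<bar>P s a - Q s a\<bar> * ?p (delta s a) x + Q s a * \<bar>?p (delta s a) x - ?q (delta s a) x\<bar>)"
    by (intro sum_mono abs_mult_diff_le string_prob_nonneg P_nonneg Q_nonneg)
  also have "\<dots> = tv UNIV (P s) (Q s) + (\<Sum>a\<in>UNIV. Q s a * tv ?L (?p (delta s a)) (?q (delta s a)))"
    by (simp add: tv_def sum.distrib sum_distrib_left[symmetric] sum_string_prob_eq_1[OF P_sum])
  also have "\<dots> \<le> e + (\<Sum>a\<in>UNIV. Q s a * (real n * e))"
    by (intro add_mono tv_le sum_mono mult_left_mono Suc.IH Q_nonneg)
  also have "\<dots> = e + (\<Sum>a\<in>UNIV. Q s a) * (real n * e)"
    by (simp add: sum_distrib_right)
  also have "\<dots> = real (Suc n) * e"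
    by (simp add: Q_sum algebra_simps)
  finally show ?case .
qed

lemma tv_nonneg: "tv A \<mu> \<nu> \<ge> 0"
  by (simp add: tv_def sum_nonneg)

theorem lemma4p2:
  fixes delta :: "'s::finite \<Rightarrow> 'a::finite \<Rightarrow> 's"
    and s0 :: 's and F :: "'s set"
    and T :: nat
    and P Q :: "'s \<Rightarrow> 'a \<Rightarrow> real"
  assumes "T \<ge> 1"
    and "\<And>s a. P s a \<ge> 0" and "\<And>s. (\<Sum>a\<in>UNIV. P s a) = 1"
    and "\<And>s a. Q s a \<ge> 0" and "\<And>s. (\<Sum>a\<in>UNIV. Q s a) = 1"
  shows "tv (strings_of_length T) (string_prob P delta s0) (string_prob Q delta s0)
           \<le> 2 * real T * real (CARD('s)) ^ (T + 1)
               * (MAX s\<in>UNIV. tv UNIV (P s) (Q s))"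
proof -
  define \<epsilon> where "\<epsilon> = (MAX s\<in>UNIV. tv UNIV (P s) (Q s))"
  have tv_le: "tv UNIV (P s) (Q s) \<le> \<epsilon>" for s
    unfolding \<epsilon>_def by (rule Max_ge) auto
  have "0 \<le> \<epsilon>"
    using tv_le[of s0] tv_nonneg by (rule order_trans[rotated])
  have "1 \<le> 2 * real (CARD('s)) ^ (T + 1)"
    using one_le_power[of "real CARD('s)" "T + 1"] by simp
  then have "real T * \<epsilon> * 1 \<le> real T * \<epsilon> * (2 * real (CARD('s)) ^ (T + 1))"
    using \<open>0 \<le> \<epsilon>\<close> by (intro mult_left_mono) auto
  then have "real T * \<epsilon> \<le> 2 * real T * real (CARD('s)) ^ (T + 1) * \<epsilon>"
    by (simp add: algebra_simps)
  with tv_string_prob_le[OF assms(2-5) tv_le] show ?thesis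
    unfolding \<epsilon>_def by (rule order_trans)
qed

end
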